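(* Assume $\mathfrak{c} = 2^{<\mathfrak{c}}$, where $\mathfrak{c}=|\mathbb{R}|$ and $2^{<\mathfrak{c}} = \sup\{2^\lambda : \lambda<\mathfrak{c}\ \text{a cardinal}\}$. Then there is a family $\{ f_\nu : \nu < 2^{\mathfrak{c}} \}$ of two-point selections on $\mathbb{R}$ such that $\mathcal{B}_{f_\mu}(\mathbb{R}) \neq \mathcal{B}_{f_\nu}(\mathbb{R})$ for all distinct $\mu, \nu < 2^{\mathfrak{c}}$.
   Context: For a set $X$, $[X]^2$ is the set of two-element subsets of $X$. A two-point selection on $X$ is a function $f:[X]^2\to X$ with $f(F)\in F$ for all $F\in[X]^2$. For a two-point selection $f$ on $X$ and distinct $r,s\in X$, write $r<_f s$ if $f(\{r,s\})=r$. Put $(\leftarrow,r)_f=\{x\in X: x<_f r\}$ and $(r,\rightarrow)_f=\{x\in X: r<_f x\}$. The topology $\tau_f$ on $X$ is the topology generated (as a subbase) by all sets $(\leftarrow,r)_f$ and $(r,\rightarrow)_f$, $r\in X$. For $X=\mathbb{R}$, $\mathcal{B}_f(\mathbb{R})$ denotes the Borel $\sigma$-algebra of $(\mathbb{R},\tau_f)$, i.e. the $\sigma$-algebra generated by $\tau_f$. *)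

theory Defs
  imports "HOL-Analysis.Analysis" "HOL-Library.Equipollence"
begin

text \<open>A two-point selection on X: a function on two-element subsets choosing a member.
  Represented as a function on all subsets; only its values on two-element subsets of X matter.\<close>
definition two_point_selection :: "'a set \<Rightarrow> ('a set \<Rightarrow> 'a) \<Rightarrow> bool" where
  "two_point_selection X f \<longleftrightarrow> (\<forall>F. F \<subseteq> X \<and> card F = 2 \<longrightarrow> f F \<in> F)"

definition sel_less :: "('a set \<Rightarrow> 'a) \<Rightarrow> 'a \<Rightarrow> 'a \<Rightarrow> bool" where
  "sel_less f r s \<longleftrightarrow> r \<noteq> s \<and> f {r, s} = r"

definition sel_left_ray :: "'a set \<Rightarrow> ('a set \<Rightarrow> 'a) \<Rightarrow> 'a \<Rightarrow> 'a set" where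
  "sel_left_ray X f r = {x \<in> X. sel_less f x r}"

definition sel_right_ray :: "'a set \<Rightarrow> ('a set \<Rightarrow> 'a) \<Rightarrow> 'a \<Rightarrow> 'a set" where
  "sel_right_ray X f r = {x \<in> X. sel_less f r x}"

definition sel_topology :: "'a set \<Rightarrow> ('a set \<Rightarrow> 'a) \<Rightarrow> 'a topology" where
  "sel_topology X f = topology_generated_by
     ((\<Union>r\<in>X. {sel_left_ray X f r, sel_right_ray X f r}) \<union> {X})"

definition sel_borel :: "'a set \<Rightarrow> ('a set \<Rightarrow> 'a) \<Rightarrow> 'a set set" where
  "sel_borel X f = sigma_sets X {U. openin (sel_topology X f) U}"

end

theory Submission
  imports Defs
begin

(* Identify R with R x R by a bijection h. For A a set of reals, let f_A choose the smaller point
   of a pair for the lexicographic tournament on R x R whose fibre over i is the usual order if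
   i is not in A and, if i is in A, the usual order modified so that the points below 2 are exactly
   those of a Vitali set V. Along a fibre over i not in A every ray of f_A traces an open interval,
   so every Borel set of tau_(f_A) traces a Borel set of R; along a fibre over i in A the left ray
   of h(i, 2) traces V, which is not Borel. So a point of A - B separates the Borel sigma-algebras
   of f_A and f_B. *)

lemma infinite_Rats_Icc: "infinite (\<rat> \<inter> {-1..1::real})"
proof
  assume "finite (\<rat> \<inter> {-1..1::real})"
  moreover have "inj (\<lambda>n::nat. 1 / real (Suc n))" by (auto simp: inj_def)
  moreover have "1 / real (Suc n) \<in> \<rat> \<inter> {-1..1}" for n
  proof -
    have "0 \<le> 1 / real (Suc n)" "1 / real (Suc n) \<le> 1"
      by (simp_all add: divide_le_eq_1 del: of_nat_Suc)
    then show ?thesis unfolding Int_iff atLeastAtMost_iff by (intro conjI) (simp, linarith+)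
  qed
  then have "range (\<lambda>n::nat. 1 / real (Suc n)) \<subseteq> \<rat> \<inter> {-1..1}" by blast
  ultimately show False by (meson finite_imageD finite_subset infinite_UNIV_nat)
qed

lemma disjoint_rational_translates:
  fixes V :: "real set"
  assumes "\<And>v w. v \<in> V \<Longrightarrow> w \<in> V \<Longrightarrow> v - w \<in> \<rat> \<Longrightarrow> v = w"
  shows "disjoint_family_on (\<lambda>q. (\<lambda>x. q + x) ` V) \<rat>"
  unfolding disjoint_family_on_def
proof (intro ballI impI)
  fix p q :: real assume "p \<in> \<rat>" "q \<in> \<rat>" "p \<noteq> q"
  show "(\<lambda>x. p + x) ` V \<inter> (\<lambda>x. q + x) ` V = {}"
  proof (rule ccontr)
    assume "(\<lambda>x. p + x) ` V \<inter> (\<lambda>x. q + x) ` V \<noteq> {}"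
    then obtain v w where "v \<in> V" "w \<in> V" and vw: "p + v = q + w" by auto
    moreover have "v - w \<in> \<rat>"
      using vw \<open>p \<in> \<rat>\<close> \<open>q \<in> \<rat>\<close> by (metis Rats_diff add_diff_cancel_left' diff_diff_eq2)
    ultimately have "v = w" using assms by blast
    then show False using vw \<open>p \<noteq> q\<close> by simp
  qed
qed

lemma rational_transversal_not_lebesgue:
  fixes V :: "real set"
  assumes V01: "V \<subseteq> {0..1}"
    and transversal: "\<And>v w. v \<in> V \<Longrightarrow> w \<in> V \<Longrightarrow> v - w \<in> \<rat> \<Longrightarrow> v = w"
    and covers: "\<And>x. x \<in> {0..1} \<Longrightarrow> \<exists>v\<in>V. x - v \<in> \<rat>"
  shows "V \<notin> sets lebesgue"
proof
  assume V: "V \<in> sets lebesgue"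
  define I where "I = \<rat> \<inter> {-1..1::real}"
  define W where "W q = (\<lambda>x. q + x) ` V" for q
  have W_sets: "W q \<in> sets lebesgue" for q
    unfolding W_def using V by (rule lebesgue_sets_translation)
  have W_measure: "emeasure lebesgue (W q) = emeasure lebesgue V" for q
    using emeasure_lebesgue_affine[of 1 q V] by (simp add: W_def add.commute)
  have "disjoint_family_on W I"
    unfolding W_def I_def
    by (rule disjoint_family_on_mono[OF _ disjoint_rational_translates]) (use transversal in auto)
  moreover have "countable I"
    unfolding I_def using countable_rat by (rule countable_Int1)
  ultimately have "emeasure lebesgue (\<Union>(W ` I)) = (\<integral>\<^sup>+q. emeasure lebesgue (W q) \<partial>count_space I)"
    using W_sets by (intro emeasure_UN_countable)
  also have "\<dots> = (\<integral>\<^sup>+q. emeasure lebesgue V \<partial>count_space I)"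
    by (simp only: W_measure)
  also have "\<dots> = emeasure lebesgue V * \<infinity>"
    using infinite_Rats_Icc by (simp add: nn_integral_const I_def)
  finally have union: "emeasure lebesgue (\<Union>(W ` I)) = emeasure lebesgue V * \<infinity>" .
  have union_sets: "\<Union>(W ` I) \<in> sets lebesgue"
    using W_sets \<open>countable I\<close> by (intro sets.countable_UN') auto
  have "{0..1} \<subseteq> \<Union>(W ` I)"
  proof
    fix x :: real assume "x \<in> {0..1}"
    with covers obtain v where "v \<in> V" "x - v \<in> \<rat>" by blast
    moreover have "x - v \<in> {-1..1}" using \<open>x \<in> {0..1}\<close> \<open>v \<in> V\<close> V01 by auto
    ultimately show "x \<in> \<Union>(W ` I)" unfolding W_def I_def by (auto intro!: bexI[of _ "x - v"])
  qed
  then have "1 \<le> emeasure lebesgue V * \<infinity>"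
    using union emeasure_mono[OF _ union_sets, of "{0..1}"] by simp
  moreover have "\<Union>(W ` I) \<subseteq> {-1..2}"
    using V01 by (auto simp: W_def I_def)
  then have "emeasure lebesgue V * \<infinity> \<le> 3"
    using union emeasure_mono[of "\<Union>(W ` I)" "{-1..2}" lebesgue] by simp
  ultimately show False
    by (cases "emeasure lebesgue V = 0") (auto simp: ennreal_mult_top top_unique)
qed

definition rational_class_rep :: "real \<Rightarrow> real" where
  "rational_class_rep x = (SOME y. y \<in> {0..1} \<and> x - y \<in> \<rat>)"

definition vitali_set :: "real set" where
  "vitali_set = range rational_class_rep"

lemma rational_class_rep: "rational_class_rep x \<in> {0..1}" "x - rational_class_rep x \<in> \<rat>"
proof -
  have "frac x \<in> {0..1} \<and> x - frac x \<in> \<rat>"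
    using frac_lt_1[of x] by (simp add: frac_def)
  then have "rational_class_rep x \<in> {0..1} \<and> x - rational_class_rep x \<in> \<rat>"
    unfolding rational_class_rep_def by (rule someI)
  then show "rational_class_rep x \<in> {0..1}" "x - rational_class_rep x \<in> \<rat>" by auto
qed

lemma rational_class_rep_eq:
  assumes "x - y \<in> \<rat>" shows "rational_class_rep x = rational_class_rep y"
proof -
  have "x - z \<in> \<rat> \<longleftrightarrow> y - z \<in> \<rat>" for z
    using Rats_diff[OF _ assms, of "x - z"] Rats_add[OF assms, of "y - z"]
    by (auto simp: algebra_simps)
  then show ?thesis unfolding rational_class_rep_def by simp
qed

lemma vitali_set_subset: "vitali_set \<subseteq> {0..1}"
  using rational_class_rep by (auto simp: vitali_set_def)

lemma vitali_set_covers: "\<exists>v\<in>vitali_set. x - v \<in> \<rat>"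
  using rational_class_rep by (auto simp: vitali_set_def)

lemma vitali_set_rational_diff:
  assumes "v \<in> vitali_set" "w \<in> vitali_set" "v - w \<in> \<rat>" shows "v = w"
proof -
  have "rational_class_rep u = u" if "u \<in> vitali_set" for u
  proof -
    from that obtain a where a: "u = rational_class_rep a" by (auto simp: vitali_set_def)
    have "rational_class_rep a - a \<in> \<rat>"
      using rational_class_rep(2) by (metis Rats_minus_iff minus_diff_eq)
    then show ?thesis using a rational_class_rep_eq by simp
  qed
  then show ?thesis using assms rational_class_rep_eq by metis
qed

lemma vitali_set_not_lebesgue: "vitali_set \<notin> sets lebesgue"
  using vitali_set_subset vitali_set_rational_diff vitali_set_covers
  by (rule rational_transversal_not_lebesgue)

lemma vitali_set_not_borel: "vitali_set \<notin> sets borel"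
  using vitali_set_not_lebesgue sets_completionI_sets[of _ lborel] by auto

definition tournament :: "('a \<Rightarrow> 'a \<Rightarrow> bool) \<Rightarrow> bool" where
  "tournament R \<longleftrightarrow> (\<forall>x y. x \<noteq> y \<longrightarrow> (R y x \<longleftrightarrow> \<not> R x y))"

definition tournament_selection :: "('a \<Rightarrow> 'a \<Rightarrow> bool) \<Rightarrow> 'a set \<Rightarrow> 'a" where
  "tournament_selection R F = (SOME x. x \<in> F \<and> (\<forall>y\<in>F. y \<noteq> x \<longrightarrow> R x y))"

lemma tournament_selection_pair:
  assumes "tournament R" "r \<noteq> s"
  shows "tournament_selection R {r, s} = (if R r s then r else s)"
proof -
  have "R s r \<longleftrightarrow> \<not> R r s"
    using assms unfolding tournament_def by blast
  then show ?thesis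
    unfolding tournament_selection_def using \<open>r \<noteq> s\<close> by (auto intro!: some_equality)
qed

lemma two_point_selection_tournament_selection:
  assumes "tournament R" shows "two_point_selection X (tournament_selection R)"
  unfolding two_point_selection_def
proof (intro allI impI)
  fix F assume "F \<subseteq> X \<and> card F = 2"
  then obtain r s where "F = {r, s}" "r \<noteq> s" by (meson card_2_iff)
  then show "tournament_selection R F \<in> F"
    using tournament_selection_pair[OF assms] by simp
qed

lemma sel_less_tournament_selection:
  assumes "tournament R" shows "sel_less (tournament_selection R) r s \<longleftrightarrow> r \<noteq> s \<and> R r s"
  using tournament_selection_pair[OF assms] unfolding sel_less_def by (auto split: if_splits)

lemma tournament_less: "tournament ((<) :: 'a::linorder \<Rightarrow> 'a \<Rightarrow> bool)"
  unfolding tournament_def by auto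

definition twisted_less :: "'a::linorder \<Rightarrow> 'a set \<Rightarrow> 'a \<Rightarrow> 'a \<Rightarrow> bool" where
  "twisted_less c L x y \<longleftrightarrow> (if y = c then x \<in> L else if x = c then y \<notin> L else x < y)"

lemma tournament_twisted_less: "tournament (twisted_less c L)"
  unfolding tournament_def twisted_less_def by auto

definition lex_sum :: "('i::linorder \<Rightarrow> 'a \<Rightarrow> 'a \<Rightarrow> bool) \<Rightarrow> 'i \<times> 'a \<Rightarrow> 'i \<times> 'a \<Rightarrow> bool" where
  "lex_sum T p q \<longleftrightarrow> fst p < fst q \<or> (fst p = fst q \<and> T (fst p) (snd p) (snd q))"

lemma tournament_lex_sum:
  fixes T :: "'i::linorder \<Rightarrow> 'a \<Rightarrow> 'a \<Rightarrow> bool"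
  assumes T: "\<And>i. tournament (T i)" shows "tournament (lex_sum T)"
  unfolding tournament_def
proof (intro allI impI)
  fix p q :: "'i \<times> 'a" assume "p \<noteq> q"
  then consider "fst p \<noteq> fst q" | "fst p = fst q" "snd p \<noteq> snd q"
    by (auto simp: prod_eq_iff)
  then show "lex_sum T q p \<longleftrightarrow> \<not> lex_sum T p q"
  proof cases
    case 1
    then show ?thesis unfolding lex_sum_def by auto
  next
    case 2
    then have "T (fst p) (snd q) (snd p) \<longleftrightarrow> \<not> T (fst p) (snd p) (snd q)"
      using T[of "fst p"] unfolding tournament_def by blast
    with 2 show ?thesis unfolding lex_sum_def by simp
  qed
qed

lemma tournament_inv_image:
  assumes "tournament R" "inj g" shows "tournament (\<lambda>s t. R (g s) (g t))"
  using assms unfolding tournament_def inj_def by blast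

definition lex_selection :: "('i::linorder \<times> 'a \<Rightarrow> 'b) \<Rightarrow> ('i \<Rightarrow> 'a \<Rightarrow> 'a \<Rightarrow> bool) \<Rightarrow> 'b set \<Rightarrow> 'b" where
  "lex_selection h T = tournament_selection (\<lambda>s t. lex_sum T (inv h s) (inv h t))"

context
  fixes h :: "'i::linorder \<times> 'a \<Rightarrow> 'b" and T :: "'i \<Rightarrow> 'a \<Rightarrow> 'a \<Rightarrow> bool"
  assumes h: "bij h" and T: "\<And>i. tournament (T i)"
begin

lemma tournament_lex_selection_relation: "tournament (\<lambda>s t. lex_sum T (inv h s) (inv h t))"
proof (rule tournament_inv_image[of "lex_sum T" "inv h"])
  show "tournament (lex_sum T)" by (rule tournament_lex_sum) (rule T)
  show "inj (inv h)" using h by (simp add: bij_imp_bij_inv bij_is_inj)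
qed

lemma two_point_selection_lex_selection: "two_point_selection X (lex_selection h T)"
  unfolding lex_selection_def
  by (rule two_point_selection_tournament_selection[OF tournament_lex_selection_relation])

lemma sel_less_lex_selection:
  "sel_less (lex_selection h T) (h p) (h q) \<longleftrightarrow> p \<noteq> q \<and> lex_sum T p q"
  unfolding lex_selection_def sel_less_tournament_selection[OF tournament_lex_selection_relation]
  using h by (simp add: bij_is_inj inj_eq)

lemma vimage_sel_left_ray_lex_selection:
  "(\<lambda>x. h (i, x)) -` sel_left_ray UNIV (lex_selection h T) (h (j, y))
     = {x. (i, x) \<noteq> (j, y) \<and> lex_sum T (i, x) (j, y)}"
  by (auto simp: sel_left_ray_def sel_less_lex_selection)

lemma vimage_sel_right_ray_lex_selection:
  "(\<lambda>x. h (i, x)) -` sel_right_ray UNIV (lex_selection h T) (h (j, y))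
     = {x. (j, y) \<noteq> (i, x) \<and> lex_sum T (j, y) (i, x)}"
  by (auto simp: sel_right_ray_def sel_less_lex_selection)

end

lemma continuous_map_lex_selection_fibre:
  fixes h :: "'i::linorder \<times> 'a::linorder_topology \<Rightarrow> 'b"
  assumes h: "bij h" and T: "\<And>j. tournament (T j)" and less: "T i = (<)"
  shows "continuous_map euclidean (sel_topology UNIV (lex_selection h T)) (\<lambda>x. h (i, x))"
  unfolding sel_topology_def
proof (rule continuous_on_generated_topo)
  fix U assume "U \<in> (\<Union>r\<in>UNIV. {sel_left_ray UNIV (lex_selection h T) r,
                                 sel_right_ray UNIV (lex_selection h T) r}) \<union> {UNIV}"
  then consider "U = UNIV"
    | r where "U = sel_left_ray UNIV (lex_selection h T) r"
    | r where "U = sel_right_ray UNIV (lex_selection h T) r"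
    by blast
  then show "openin euclidean ((\<lambda>x. h (i, x)) -` U \<inter> topspace euclidean)"
  proof cases
    case (2 r)
    obtain j y where "r = h (j, y)" using h by (metis bij_pointE surj_pair)
    with 2 have "(\<lambda>x. h (i, x)) -` U = (if i < j then UNIV else if i = j then {..<y} else {})"
      using less by (auto simp: vimage_sel_left_ray_lex_selection[OF h T] lex_sum_def)
    then show ?thesis by simp
  next
    case (3 r)
    obtain j y where "r = h (j, y)" using h by (metis bij_pointE surj_pair)
    with 3 have "(\<lambda>x. h (i, x)) -` U = (if j < i then UNIV else if i = j then {y<..} else {})"
      using less by (auto simp: vimage_sel_right_ray_lex_selection[OF h T] lex_sum_def)
    then show ?thesis by simp
  qed simp
qed auto

lemma vimage_sel_borel:
  fixes e :: "'a::topological_space \<Rightarrow> 'b"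
  assumes e: "continuous_map euclidean (sel_topology UNIV f) e" and S: "S \<in> sel_borel UNIV f"
  shows "e -` S \<in> sets borel"
  using S unfolding sel_borel_def
proof (induction rule: sigma_sets.induct)
  case (Basic U)
  then have "open (e -` U)"
    using e by (auto simp: continuous_map_def vimage_def)
  then show ?case by simp
next
  case (Compl A) then show ?case by (simp add: vimage_Diff sets.compl_sets)
next
  case (Union A) then show ?case by (simp add: vimage_UN)
qed simp

lemma sel_left_ray_in_sel_borel: "r \<in> X \<Longrightarrow> sel_left_ray X f r \<in> sel_borel X f"
  unfolding sel_borel_def sel_topology_def
  by (intro sigma_sets.Basic CollectI topology_generated_by_Basis) blast

lemma vimage_sel_left_ray_twisted_fibre:
  assumes "bij h" "\<And>j. tournament (T j)" "T i = twisted_less c L"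
  shows "(\<lambda>x. h (i, x)) -` sel_left_ray UNIV (lex_selection h T) (h (i, c)) = L - {c}"
  using assms by (auto simp: vimage_sel_left_ray_lex_selection lex_sum_def twisted_less_def)

lemma sel_borel_lex_selection_neq:
  fixes h :: "'i::linorder \<times> 'a::linorder_topology \<Rightarrow> 'b"
  assumes h: "bij h" and T: "\<And>j. tournament (T j)" and T': "\<And>j. tournament (T' j)"
    and twisted: "T i = twisted_less c L" and less: "T' i = (<)"
    and "c \<notin> L" and "L \<notin> sets borel"
  shows "sel_borel UNIV (lex_selection h T) \<noteq> sel_borel UNIV (lex_selection h T')"
proof
  assume eq: "sel_borel UNIV (lex_selection h T) = sel_borel UNIV (lex_selection h T')"
  let ?ray = "sel_left_ray UNIV (lex_selection h T) (h (i, c))"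
  have "?ray \<in> sel_borel UNIV (lex_selection h T)"
    by (rule sel_left_ray_in_sel_borel) simp
  then have "?ray \<in> sel_borel UNIV (lex_selection h T')"
    by (simp only: eq)
  then have "(\<lambda>x. h (i, x)) -` ?ray \<in> sets borel"
    by (rule vimage_sel_borel[OF continuous_map_lex_selection_fibre[where T = T', OF h T' less]])
  moreover have "(\<lambda>x. h (i, x)) -` ?ray = L"
    unfolding vimage_sel_left_ray_twisted_fibre[where T = T, OF h T twisted] using \<open>c \<notin> L\<close> by blast
  ultimately show False using \<open>L \<notin> sets borel\<close> by simp
qed

lemma infinite_imp_bij_square:
  assumes "infinite (UNIV :: 'a set)" shows "\<exists>h :: 'a \<times> 'a \<Rightarrow> 'a. bij h"
proof -
  obtain h :: "'a \<times> 'a \<Rightarrow> 'a" where "bij_betw h (UNIV \<times> UNIV) UNIV"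
    using card_of_ordIso[THEN iffD2, OF card_of_Times_same_infinite[OF assms]] by blast
  then show ?thesis by auto
qed

theorem theorem3p6:
  assumes "\<forall>S :: real set. S \<prec> (UNIV :: real set) \<longrightarrow> Pow S \<lesssim> (UNIV :: real set)"
  shows "\<exists>F :: real set \<Rightarrow> (real set \<Rightarrow> real).
           (\<forall>A. two_point_selection (UNIV :: real set) (F A)) \<and>
           (\<forall>A B. A \<noteq> B \<longrightarrow> sel_borel UNIV (F A) \<noteq> sel_borel UNIV (F B))"
proof -
  obtain h :: "real \<times> real \<Rightarrow> real" where h: "bij h"
    using infinite_imp_bij_square[OF infinite_UNIV_char_0] by blast
  define T where "T A i = (if i \<in> A then twisted_less 2 vitali_set else (<))" for A :: "real set" and i
  have T: "tournament (T A i)" for A i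
    by (simp add: T_def tournament_twisted_less tournament_less)
  have distinct: "sel_borel UNIV (lex_selection h (T A)) \<noteq> sel_borel UNIV (lex_selection h (T B))"
    if "i \<in> A" "i \<notin> B" for A B i
  proof (rule sel_borel_lex_selection_neq[where T = "T A" and T' = "T B" and i = i and c = 2])
    show "T A i = twisted_less 2 vitali_set" "T B i = (<)"
      using that by (simp_all add: T_def)
    show "2 \<notin> vitali_set"
      using vitali_set_subset by auto
  qed (fact h T vitali_set_not_borel)+
  show ?thesis
  proof (intro exI[of _ "\<lambda>A. lex_selection h (T A)"] conjI allI impI)
    fix A show "two_point_selection UNIV (lex_selection h (T A))"
      by (rule two_point_selection_lex_selection[where T = "T A", OF h T])
  next
    fix A B :: "real set" assume "A \<noteq> B"
    then obtain i where "i \<in> A \<and> i \<notin> B \<or> i \<in> B \<and> i \<notin> A" by blast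
    then show "sel_borel UNIV (lex_selection h (T A)) \<noteq> sel_borel UNIV (lex_selection h (T B))"
      using distinct by metis
  qed
qed

end
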